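(* For every $\alpha\in(0,1]$ and every $P\in\mathcal{P}$, the set $P^\alpha$ is compact in $\mathcal{P}$ for the weak topology.
   Context: $\mathcal{P}$ denotes the set of all probability measures on $(\mathbb{R}^d,\mathcal{B}_d)$, $\mathcal{B}_d$ the Borel $\sigma$-algebra, endowed with the topology of weak convergence. For $P\in\mathcal{P}$ and $\alpha\in(0,1]$, the $\alpha$-trimming of $P$ is $P^\alpha=\{Q\in\mathcal{P} : Q(B)\le \alpha^{-1}P(B)\text{ for all } B\in\mathcal{B}_d\}$. *)

theory Defs
  imports "HOL-Probability.Probability"
begin

text \<open>The set of all probability measures on the Borel sets of a Euclidean space
  (R^d is modelled by a type of class euclidean_space).\<close>
definition prob_measures :: "'a::euclidean_space measure set" where
  "prob_measures = {M. sets M = sets borel \<and> prob_space M}"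

definition weak_topology :: "'a::euclidean_space measure topology" where
  "weak_topology = topology_generated_by
     {{Q \<in> prob_measures. (\<integral>x. f x \<partial>Q) \<in> U} | (f :: 'a \<Rightarrow> real) U.
        continuous_on UNIV f \<and> bounded (range f) \<and> open U}"

definition trimming :: "real \<Rightarrow> 'a::euclidean_space measure \<Rightarrow> 'a measure set" where
  "trimming \<alpha> P = {Q \<in> prob_measures. \<forall>B \<in> sets borel. measure Q B \<le> measure P B / \<alpha>}"

end

theory Submission imports Defs begin

(* A measure Q in P^alpha is determined by the family (Q(B))_B of its values on
   Borel sets, each lying in [0, P(B)/alpha].  So P^alpha is the image of the set
   K of finitely additive, normalised set functions mu with 0 <= mu(B) <= P(B)/alpha,
   viewed inside the product space of reals indexed by Borel sets:
   (1) K is compact (Tychonoff: closed subset of a product of compact intervals);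
   (2) the domination mu <= P/alpha forces countable additivity, so every mu in K
       extends to a probability measure, and P^alpha is exactly the image of K;
   (3) this extension map is continuous into the weak topology: for bounded
       continuous f, the integral of f is a uniform limit on K of finite linear
       combinations of coordinates mu(B), namely integrals of the step functions
       floor(m f)/m.
   Compactness is preserved by continuous images, which proves the theorem.  None of the steps uses the
   bounds 0 < alpha <= 1; they only make the trimming the intended object. *)

lemma continuous_map_uniform_limit_real:
  fixes g :: "'b \<Rightarrow> real"
  assumes "\<And>n. continuous_map X euclidean (h n)"
    and "\<And>n x. x \<in> topspace X \<Longrightarrow> \<bar>h n x - g x\<bar> \<le> 1 / Suc n"
  shows "continuous_map X euclidean g"
proof -
  have "continuous_map X Met_TC.mtopology g"
  proof (rule Met_TC.continuous_map_uniform_limit[where F=sequentially and f=h])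
    show "\<forall>\<^sub>F n in sequentially. continuous_map X Met_TC.mtopology (h n)"
      using assms(1) by simp
    fix e :: real assume "0 < e"
    then obtain N where N: "1 / Suc N < e" using nat_approx_posE by blast
    show "\<forall>\<^sub>F n in sequentially. \<forall>x\<in>topspace X. g x \<in> UNIV \<and> dist (h n x) (g x) < e"
      unfolding eventually_sequentially
    proof (intro exI[of _ N] allI impI ballI conjI)
      fix n x assume "N \<le> n" "x \<in> topspace X"
      have "1 / Suc n \<le> 1 / Suc N" by (simp add: frac_le \<open>N \<le> n\<close>)
      then show "dist (h n x) (g x) < e"
        using assms(2)[OF \<open>x \<in> topspace X\<close>, of n] N by (simp add: dist_real_def)
    qed simp
  qed simp
  then show ?thesis by simp
qed

text \<open>A finitely additive nonnegative set function dominated by a multiple of a finite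
  measure is continuous at the empty set, hence countably additive.\<close>
lemma countably_additive_if_dominated:
  fixes P :: "'a measure" and \<mu> :: "'a set \<Rightarrow> real"
  assumes "finite_measure P"
    and nonneg: "\<And>B. B \<in> sets P \<Longrightarrow> 0 \<le> \<mu> B"
    and dominated: "\<And>B. B \<in> sets P \<Longrightarrow> \<mu> B \<le> measure P B / \<alpha>"
    and additive: "\<And>A B. A \<in> sets P \<Longrightarrow> B \<in> sets P \<Longrightarrow> A \<inter> B = {} \<Longrightarrow> \<mu> (A \<union> B) = \<mu> A + \<mu> B"
  shows "countably_additive (sets P) (\<lambda>B. ennreal (\<mu> B))"
proof -
  interpret finite_measure P by fact
  have "\<mu> {} = 0" using additive[of "{}" "{}"] by simp
  then have pos: "positive (sets P) (\<lambda>B. ennreal (\<mu> B))" by (simp add: positive_def)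
  have add: "additive (sets P) (\<lambda>B. ennreal (\<mu> B))"
    unfolding additive_def using additive nonneg by (simp add: ennreal_plus)
  show ?thesis
  proof (rule sets.empty_continuous_imp_countably_additive[OF pos add])
    fix A :: "nat \<Rightarrow> 'a set" assume A: "range A \<subseteq> sets P" "decseq A" "(\<Inter>i. A i) = {}"
    have "(\<lambda>n. measure P (A n)) \<longlonglongrightarrow> 0"
      using finite_Lim_measure_decseq[OF A(1,2)] A(3) by simp
    then have upper: "(\<lambda>n. measure P (A n) / \<alpha>) \<longlonglongrightarrow> 0" by (rule tendsto_divide_zero)
    have "(\<lambda>n. \<mu> (A n)) \<longlonglongrightarrow> 0"
    proof (rule tendsto_sandwich[OF _ _ tendsto_const upper])
      show "\<forall>\<^sub>F n in sequentially. 0 \<le> \<mu> (A n)" using A(1) nonneg by auto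
      show "\<forall>\<^sub>F n in sequentially. \<mu> (A n) \<le> measure P (A n) / \<alpha>" using A(1) dominated by auto
    qed
    then show "(\<lambda>n. ennreal (\<mu> (A n))) \<longlonglongrightarrow> 0" using tendsto_ennrealI by fastforce
  qed simp
qed

lemma floor_scaled_in_range:
  fixes y M m :: real
  assumes "\<bar>y\<bar> \<le> M" and "0 < m"
  shows "\<lfloor>m * y\<rfloor> \<in> {-(\<lceil>m * M\<rceil> + 1) .. \<lceil>m * M\<rceil> + 1}"
proof -
  have "\<bar>m * y\<bar> \<le> m * M" using assms by (simp add: abs_mult mult_left_mono)
  then have "- (m * M) \<le> m * y" "m * y \<le> m * M" by auto
  moreover have "m * M \<le> of_int \<lceil>m * M\<rceil>" by simp
  ultimately show ?thesis
    unfolding atLeastAtMost_iff le_floor_iff floor_le_iff of_int_minus of_int_add of_int_1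
    by linarith
qed

lemma integral_floor_approx:
  fixes Q :: "'a measure" and f :: "'a \<Rightarrow> real"
  assumes "prob_space Q" and f: "f \<in> borel_measurable Q"
    and M: "\<And>x. \<bar>f x\<bar> \<le> M" and m: "0 < m"
  shows "\<bar>(\<Sum>k\<in>{-(\<lceil>m * M\<rceil> + 1) .. \<lceil>m * M\<rceil> + 1}.
            (of_int k / m) * measure Q {x \<in> space Q. \<lfloor>m * f x\<rfloor> = k}) - (\<integral>x. f x \<partial>Q)\<bar> \<le> 1 / m"
proof -
  interpret prob_space Q by fact
  define I where "I = {-(\<lceil>m * M\<rceil> + 1) .. \<lceil>m * M\<rceil> + 1}"
  define L where "L k = {x \<in> space Q. \<lfloor>m * f x\<rfloor> = k}" for k
  define s where "s x = (\<Sum>k\<in>I. (of_int k / m) * indicator (L k) x)" for x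
  have L: "L k \<in> sets Q" for k unfolding L_def using f by measurable
  have s_eq: "s x = of_int \<lfloor>m * f x\<rfloor> / m" if "x \<in> space Q" for x
  proof -
    have "s x = (\<Sum>k\<in>I. if \<lfloor>m * f x\<rfloor> = k then of_int k / m else 0)"
      unfolding s_def by (intro sum.cong) (auto simp: indicator_def L_def that)
    also have "\<dots> = of_int \<lfloor>m * f x\<rfloor> / m"
      using floor_scaled_in_range[OF M m] by (simp add: I_def)
    finally show ?thesis .
  qed
  have int_L: "integrable Q (indicator (L k) :: 'a \<Rightarrow> real)" for k
    using L by (intro integrable_real_indicator) (auto simp: emeasure_eq_measure)
  have int_s: "integrable Q s"
    unfolding s_def by (intro Bochner_Integration.integrable_sum integrable_mult_right int_L)
  have integral_s: "(\<integral>x. s x \<partial>Q) = (\<Sum>k\<in>I. (of_int k / m) * measure Q (L k))"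
    unfolding s_def using int_L L
    by (simp add: Bochner_Integration.integral_sum emeasure_eq_measure)
  have int_f: "integrable Q f" by (rule integrable_const_bound[where B=M]) (use M f in auto)
  have step_error: "0 \<le> f x - s x \<and> f x - s x \<le> 1 / m" if "x \<in> space Q" for x
  proof -
    have "f x - s x = (m * f x - of_int \<lfloor>m * f x\<rfloor>) / m"
      using m by (simp add: s_eq that field_simps)
    moreover have "0 \<le> m * f x - of_int \<lfloor>m * f x\<rfloor>" "m * f x - of_int \<lfloor>m * f x\<rfloor> \<le> 1" by linarith+
    ultimately show ?thesis using m by (simp add: divide_right_mono)
  qed
  have "(\<integral>x. f x \<partial>Q) - (\<integral>x. s x \<partial>Q) = (\<integral>x. f x - s x \<partial>Q)" using int_f int_s by simp
  moreover have "0 \<le> (\<integral>x. f x - s x \<partial>Q)"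
    using step_error by (intro Bochner_Integration.integral_nonneg) auto
  moreover have "(\<integral>x. f x - s x \<partial>Q) \<le> (\<integral>x. 1 / m \<partial>Q)"
    using step_error int_f int_s by (intro integral_mono) auto
  ultimately show ?thesis using integral_s prob_space by (simp add: I_def L_def)
qed

lemma continuous_map_weak_topologyI:
  fixes F :: "'b \<Rightarrow> 'a::euclidean_space measure"
  assumes into: "F ` topspace X \<subseteq> prob_measures"
    and integrals: "\<And>f :: 'a \<Rightarrow> real. continuous_on UNIV f \<Longrightarrow> bounded (range f) \<Longrightarrow>
        continuous_map X euclidean (\<lambda>x. \<integral>y. f y \<partial>F x)"
  shows "continuous_map X weak_topology F"
  unfolding weak_topology_def
proof (rule continuous_on_generated_topo)
  fix U assume "U \<in> {{Q \<in> prob_measures. (\<integral>x. f x \<partial>Q) \<in> U} | (f :: 'a \<Rightarrow> real) U.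
      continuous_on UNIV f \<and> bounded (range f) \<and> open U}"
  then obtain f :: "'a \<Rightarrow> real" and V where U: "U = {Q \<in> prob_measures. (\<integral>x. f x \<partial>Q) \<in> V}"
    and f: "continuous_on UNIV f" "bounded (range f)" and V: "open V" by blast
  have "F -` U \<inter> topspace X = {x \<in> topspace X. (\<integral>y. f y \<partial>F x) \<in> V}"
    using into U by auto
  then show "openin X (F -` U \<inter> topspace X)"
    using openin_continuous_map_preimage[OF integrals[OF f], of V] V by simp
next
  have "prob_measures \<in> {{Q \<in> prob_measures. (\<integral>x. f x \<partial>Q) \<in> U} | (f :: 'a \<Rightarrow> real) U.
      continuous_on UNIV f \<and> bounded (range f) \<and> open U}"
    by (intro CollectI exI[of _ "\<lambda>_::'a. 0::real"] exI[of _ "UNIV::real set"]) simp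
  then show "F ` topspace X \<subseteq> \<Union> {{Q \<in> prob_measures. (\<integral>x. f x \<partial>Q) \<in> U} | (f :: 'a \<Rightarrow> real) U.
      continuous_on UNIV f \<and> bounded (range f) \<and> open U}"
    by (rule order_trans[OF into Union_upper])
qed

definition trim_functions :: "real \<Rightarrow> 'a::euclidean_space measure \<Rightarrow> ('a set \<Rightarrow> real) set" where
  "trim_functions \<alpha> P = {\<mu> \<in> PiE (sets borel) (\<lambda>B. {0 .. measure P B / \<alpha>}). \<mu> UNIV = 1 \<and>
     (\<forall>A\<in>sets borel. \<forall>B\<in>sets borel. A \<inter> B = {} \<longrightarrow> \<mu> (A \<union> B) = \<mu> A + \<mu> B)}"

definition borel_measure_of :: "('a::euclidean_space set \<Rightarrow> real) \<Rightarrow> 'a measure" where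
  "borel_measure_of \<mu> = measure_of UNIV (sets borel) (\<lambda>B. ennreal (\<mu> B))"

lemma borel_measure_of_trim_function:
  fixes P :: "'a::euclidean_space measure"
  assumes P: "P \<in> prob_measures" and \<mu>: "\<mu> \<in> trim_functions \<alpha> P"
  shows "sets (borel_measure_of \<mu>) = sets borel"
    and "\<And>B. B \<in> sets borel \<Longrightarrow> emeasure (borel_measure_of \<mu>) B = ennreal (\<mu> B)"
    and "\<And>B. B \<in> sets borel \<Longrightarrow> measure (borel_measure_of \<mu>) B = \<mu> B"
    and "borel_measure_of \<mu> \<in> prob_measures"
proof -
  have sP: "sets P = sets borel" and fin: "finite_measure P"
    using P by (auto simp: prob_measures_def prob_space_def)
  have nonneg: "\<And>B. B \<in> sets borel \<Longrightarrow> 0 \<le> \<mu> B"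
    and dominated: "\<And>B. B \<in> sets borel \<Longrightarrow> \<mu> B \<le> measure P B / \<alpha>"
    and additive: "\<And>A B. A \<in> sets borel \<Longrightarrow> B \<in> sets borel \<Longrightarrow> A \<inter> B = {} \<Longrightarrow> \<mu> (A \<union> B) = \<mu> A + \<mu> B"
    and one: "\<mu> UNIV = 1"
    using \<mu> unfolding trim_functions_def PiE_def Pi_def by auto
  have ca: "countably_additive (sets borel) (\<lambda>B. ennreal (\<mu> B))"
    by (rule countably_additive_if_dominated[OF fin, unfolded sP]) (use nonneg dominated additive in auto)
  have pos: "positive (sets borel) (\<lambda>B. ennreal (\<mu> B))"
    using additive[of "{}" "{}"] by (simp add: positive_def)
  have sa: "sigma_algebra UNIV (sets (borel :: 'a measure))"
    using sets.sigma_algebra_axioms[of borel] by simp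
  show sets: "sets (borel_measure_of \<mu>) = sets borel"
    unfolding borel_measure_of_def by (simp add: sets_measure_of sigma_algebra.sigma_sets_eq[OF sa])
  show em: "\<And>B. B \<in> sets borel \<Longrightarrow> emeasure (borel_measure_of \<mu>) B = ennreal (\<mu> B)"
    unfolding borel_measure_of_def by (rule emeasure_measure_of_sigma[OF sa pos ca])
  show "\<And>B. B \<in> sets borel \<Longrightarrow> measure (borel_measure_of \<mu>) B = \<mu> B"
    using em nonneg by (simp add: measure_def)
  have "space (borel_measure_of \<mu>) = UNIV"
    unfolding borel_measure_of_def by (simp add: space_measure_of_conv)
  then have "prob_space (borel_measure_of \<mu>)" by (intro prob_spaceI) (simp add: em one)
  then show "borel_measure_of \<mu> \<in> prob_measures" using sets by (simp add: prob_measures_def)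
qed

text \<open>The trimming is exactly the set of measures generated by dominated set functions:
  a measure in the trimming is generated by its own restriction to the Borel sets.\<close>
lemma trimming_eq_image:
  fixes P :: "'a::euclidean_space measure"
  assumes P: "P \<in> prob_measures"
  shows "trimming \<alpha> P = borel_measure_of ` trim_functions \<alpha> P"
proof
  show "borel_measure_of ` trim_functions \<alpha> P \<subseteq> trimming \<alpha> P"
  proof
    fix Q assume "Q \<in> borel_measure_of ` trim_functions \<alpha> P"
    then obtain \<mu> where \<mu>: "\<mu> \<in> trim_functions \<alpha> P" and Q: "Q = borel_measure_of \<mu>" by auto
    have "\<And>B. B \<in> sets borel \<Longrightarrow> \<mu> B \<le> measure P B / \<alpha>"
      using \<mu> unfolding trim_functions_def PiE_def Pi_def by auto
    then show "Q \<in> trimming \<alpha> P"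
      unfolding trimming_def Q using borel_measure_of_trim_function(3,4)[OF P \<mu>] by auto
  qed
next
  show "trimming \<alpha> P \<subseteq> borel_measure_of ` trim_functions \<alpha> P"
  proof
    fix Q assume Q: "Q \<in> trimming \<alpha> P"
    interpret Q: prob_space Q using Q by (simp add: trimming_def prob_measures_def)
    have sQ: "sets Q = sets borel" using Q by (simp add: trimming_def prob_measures_def)
    have spQ: "space Q = UNIV" using sets_eq_imp_space_eq[OF sQ] by simp
    define \<mu> where "\<mu> = restrict (measure Q) (sets borel)"
    have "\<mu> \<in> PiE (sets borel) (\<lambda>B. {0 .. measure P B / \<alpha>})"
      using Q by (simp add: \<mu>_def trimming_def restrict_PiE_iff)
    moreover have "\<mu> UNIV = 1" using Q.prob_space spQ by (simp add: \<mu>_def)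
    moreover have "\<mu> (A \<union> B) = \<mu> A + \<mu> B"
      if "A \<in> sets borel" "B \<in> sets borel" "A \<inter> B = {}" for A B
      using that sQ by (simp add: \<mu>_def Q.finite_measure_Union)
    ultimately have \<mu>: "\<mu> \<in> trim_functions \<alpha> P" by (simp add: trim_functions_def)
    have "borel_measure_of \<mu> = Q"
    proof (rule measure_eqI)
      show "sets (borel_measure_of \<mu>) = sets Q"
        using borel_measure_of_trim_function(1)[OF P \<mu>] sQ by simp
      fix B assume "B \<in> sets (borel_measure_of \<mu>)"
      then have "B \<in> sets borel" using borel_measure_of_trim_function(1)[OF P \<mu>] by simp
      then show "emeasure (borel_measure_of \<mu>) B = emeasure Q B"
        using borel_measure_of_trim_function(2)[OF P \<mu>] sQ
        by (simp add: \<mu>_def Q.emeasure_eq_measure)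
    qed
    then show "Q \<in> borel_measure_of ` trim_functions \<alpha> P" using \<mu> by blast
  qed
qed

text \<open>Tychonoff: the dominated set functions form a closed subset of the compact product
  of the intervals [0, P(B)/alpha], since normalisation and additivity are conditions
  on finitely many coordinates.\<close>
lemma trim_functions_compact:
  "compactin (product_topology (\<lambda>_. euclidean) (sets borel)) (trim_functions \<alpha> P)"
proof -
  let ?X = "product_topology (\<lambda>_. euclidean::real topology) (sets (borel::'a::euclidean_space measure))"
  define D where "D = {(A, B). A \<in> sets (borel::'a measure) \<and> B \<in> sets (borel::'a measure) \<and> A \<inter> B = {}}"
  define C where "C = (\<lambda>(A, B). {\<mu> \<in> topspace ?X. \<mu> (A \<union> B) - \<mu> A - \<mu> B \<in> {0}})"
  have box: "compactin ?X (PiE (sets borel) (\<lambda>B. {0 .. measure P B / \<alpha>}))"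
    by (simp add: compactin_PiE)
  have normalised: "closedin ?X {\<mu> \<in> topspace ?X. \<mu> UNIV \<in> {1}}"
    by (rule closedin_continuous_map_preimage[OF continuous_map_product_projection]) simp_all
  have "closedin ?X (C d)" if "d \<in> D" for d
  proof -
    obtain A B where d: "d = (A, B)" "A \<in> sets borel" "B \<in> sets borel"
      using \<open>d \<in> D\<close> D_def by auto
    then have AB: "A \<union> B \<in> sets borel" by auto
    have "continuous_map ?X euclidean (\<lambda>\<mu>. \<mu> (A \<union> B) - \<mu> A - \<mu> B)"
      by (intro continuous_map_diff
          continuous_map_product_projection[of _ _ "\<lambda>_. euclidean", simplified] AB d)
    from closedin_continuous_map_preimage[OF this, of "{0}"] show ?thesis
      unfolding d C_def by simp
  qed
  moreover have "D \<noteq> {}" unfolding D_def by auto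
  ultimately have additive: "closedin ?X (\<Inter>(C ` D))" by (intro closedin_Inter) auto
  have eq: "trim_functions \<alpha> P = ({\<mu> \<in> topspace ?X. \<mu> UNIV \<in> {1}} \<inter> \<Inter>(C ` D))
      \<inter> PiE (sets borel) (\<lambda>B. {0 .. measure P B / \<alpha>})"
    unfolding trim_functions_def C_def D_def by (auto simp: topspace_product_topology PiE_def Pi_def)
  show ?thesis
    unfolding eq by (intro closed_Int_compactin closedin_Int normalised additive box)
qed

text \<open>For bounded continuous f, the integral of f against the generated measure depends
  continuously on the dominated set function: it is the uniform limit of the finite
  combinations of coordinates given by the step-function approximation.\<close>
lemma continuous_integral_trim_functions:
  fixes P :: "'a::euclidean_space measure" and f :: "'a \<Rightarrow> real"
  assumes P: "P \<in> prob_measures" and f: "continuous_on UNIV f" "bounded (range f)"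
  shows "continuous_map (subtopology (product_topology (\<lambda>_. euclidean) (sets borel)) (trim_functions \<alpha> P))
           euclidean (\<lambda>\<mu>. \<integral>x. f x \<partial>borel_measure_of \<mu>)"
proof -
  let ?Y = "subtopology (product_topology (\<lambda>_. euclidean::real topology) (sets (borel::'a measure)))
              (trim_functions \<alpha> P)"
  obtain M where M: "\<And>x. \<bar>f x\<bar> \<le> M" using f(2) by (auto simp: bounded_iff)
  have f_borel: "f \<in> borel_measurable borel" using f(1) by (rule borel_measurable_continuous_onI)
  define L where "L n k = {x. \<lfloor>real (Suc n) * f x\<rfloor> = k}" for n k
  have L: "L n k \<in> sets borel" for n k unfolding L_def using f_borel by measurable
  define h where "h n \<mu> = (\<Sum>k\<in>{-(\<lceil>real (Suc n) * M\<rceil> + 1) .. \<lceil>real (Suc n) * M\<rceil> + 1}.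
      (of_int k / real (Suc n)) * \<mu> (L n k))" for n \<mu>
  show ?thesis
  proof (rule continuous_map_uniform_limit_real[where h=h])
    fix n
    have coordinate: "continuous_map ?Y euclidean (\<lambda>\<mu>. \<mu> (L n k))" for k
      by (rule continuous_map_from_subtopology[OF continuous_map_product_projection[OF L]])
    show "continuous_map ?Y euclidean (h n)"
      unfolding h_def by (intro continuous_map_sum continuous_map_real_mult_left coordinate) simp
    fix \<mu> assume "\<mu> \<in> topspace ?Y"
    then have \<mu>: "\<mu> \<in> trim_functions \<alpha> P"
      by simp
    note Q = borel_measure_of_trim_function[OF P \<mu>]
    have space: "space (borel_measure_of \<mu>) = UNIV" using sets_eq_imp_space_eq[OF Q(1)] by simp
    have "prob_space (borel_measure_of \<mu>)" using Q(4) by (simp add: prob_measures_def)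
    moreover have "f \<in> borel_measurable (borel_measure_of \<mu>)"
      using f_borel measurable_cong_sets[OF Q(1) refl, of borel] by metis
    ultimately have approx: "\<bar>(\<Sum>k\<in>{-(\<lceil>real (Suc n) * M\<rceil> + 1) .. \<lceil>real (Suc n) * M\<rceil> + 1}.
        (of_int k / real (Suc n)) * measure (borel_measure_of \<mu>) {x \<in> space (borel_measure_of \<mu>). \<lfloor>real (Suc n) * f x\<rfloor> = k})
        - (\<integral>x. f x \<partial>borel_measure_of \<mu>)\<bar> \<le> 1 / real (Suc n)"
      by (rule integral_floor_approx[OF _ _ M]) simp
    have level: "measure (borel_measure_of \<mu>) {x \<in> space (borel_measure_of \<mu>). \<lfloor>real (Suc n) * f x\<rfloor> = k}
        = \<mu> (L n k)" for k
      using Q(3)[OF L, of n k] by (simp add: space L_def)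
    show "\<bar>h n \<mu> - (\<integral>x. f x \<partial>borel_measure_of \<mu>)\<bar> \<le> 1 / real (Suc n)"
      using approx by (simp only: h_def level)
  qed
qed

text \<open>The trimming is the continuous image, under the extension map, of the compact
  set of dominated set functions.\<close>
theorem lemma3:
  fixes P :: "'a::euclidean_space measure" and \<alpha> :: real
  assumes "0 < \<alpha>" and "\<alpha> \<le> 1" and "P \<in> prob_measures"
  shows "compactin weak_topology (trimming \<alpha> P)"
proof -
  let ?X = "product_topology (\<lambda>_. euclidean::real topology) (sets (borel::'a measure))"
  let ?K = "trim_functions \<alpha> P"
  have K: "compactin (subtopology ?X ?K) ?K"
    using trim_functions_compact by (simp add: compactin_subtopology)
  have space: "topspace (subtopology ?X ?K) = ?K"
    using compactin_subset_topspace[OF trim_functions_compact] by auto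
  have "continuous_map (subtopology ?X ?K) weak_topology borel_measure_of"
  proof (rule continuous_map_weak_topologyI)
    show "borel_measure_of ` topspace (subtopology ?X ?K) \<subseteq> prob_measures"
      using borel_measure_of_trim_function(4)[OF assms(3)] space by auto
  qed (rule continuous_integral_trim_functions[OF assms(3)])
  from image_compactin[OF K this] show ?thesis
    by (simp add: trimming_eq_image[OF assms(3)])
qed

end
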